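(* Let $v$ be a non-leaf node of a draft tree with $m$ children $\mathcal{C}(v)=\{u_1,\dots,u_m\}$ generated by Greedy sampling, and let $\tilde p_v\in[0,1]$. Call an allocation at $v$ any rule assigning to each possible value $s$ of the sampled child $u_m$ numbers $q(t\mid s)\ge 0$, $t\in\Sigma$, with $\sum_{t\in\Sigma}q(t\mid s)\le 1$, that is locally lossless, i.e. $\sum_{s\in\Sigma}\mathcal{M}_s^\neg(s\mid v)\,q(t\mid s)=\tilde p_v\mathcal{M}_b(t\mid v)$ for all $t\in\Sigma$. Its conditional acceptance rate is $\mathbb{E}_{u_m\sim\mathcal{M}_s^\neg(\cdot\mid v)}\big[\sum_{j=1}^m q(u_j\mid u_m)\big]$. Then the UniVer allocation (the numbers $p_v(\cdot)$ defined in the context, viewed as functions of $u_m$) achieves the maximum conditional acceptance rate among all locally lossless allocations at $v$, and this maximum equals $$\alpha^*_{\rm UniVer}=\sum_{u\in H_v}\tilde p_v\mathcal{M}_b(u\mid v)+\sum_{u\in\Sigma}\min\{\tilde p_v\mathcal{M}_b(u\mid v),\,\mathcal{M}_s^\neg(u\mid v)\}.$$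
   Context: Let $\Sigma$ be a finite vocabulary, and let $\mathcal{M}_b(\cdot\mid v)$ (target) and $\mathcal{M}_s(\cdot\mid v)$ (draft) be probability distributions on $\Sigma$ conditioned on the context $v$. Greedy sampling of the $m$ children of $v$: $u_1,\dots,u_{m-1}$ are the $m-1$ most probable tokens under $\mathcal{M}_s(\cdot\mid v)$ (set $H_v=\{u_1,\dots,u_{m-1}\}$, i.e. $H_v$ is the set of the top-$(m-1)$ tokens of $\mathcal{M}_s(\cdot\mid v)$, ties broken by a fixed rule), and $u_m$ is drawn from the residual distribution $\mathcal{M}_s^\neg(\cdot\mid v)$, where $\mathcal{M}_s^\neg(x\mid v)=\mathcal{M}_s(x\mid v)/\sum_{y\notin H_v}\mathcal{M}_s(y\mid v)$ for $x\notin H_v$ and $0$ for $x\in H_v$. $[x]_+=\max\{x,0\}$. UniVer allocation at $v$ with prefix acceptance probability $\tilde p_v$: $Z_v=1-\tilde p_v+\sum_{x\in\Sigma}[\tilde p_v\mathcal{M}_b(x\mid v)-\mathcal{M}_s^\neg(x\mid v)]_+$; $p_v(u_m)=\min\{1,\tilde p_v\mathcal{M}_b(u_m\mid v)/\mathcal{M}_s^\neg(u_m\mid v)\}$; for every $u\in\Sigma\setminus\{u_m\}$, $p_v(u)=[\tilde p_v\mathcal{M}_b(u\mid v)-\mathcal{M}_s^\neg(u\mid v)]_+\,(1-p_v(u_m))/Z_v$. *)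

theory Defs
  imports Complex_Main
begin

definition is_dist :: "('a::finite \<Rightarrow> real) \<Rightarrow> bool" where
  "is_dist P \<longleftrightarrow> (\<forall>x. 0 \<le> P x) \<and> (\<Sum>x\<in>UNIV. P x) = 1"

text \<open>H is a set of top-(m-1) tokens of the draft distribution Ms (any tie-breaking).\<close>
definition is_top_set :: "('a::finite \<Rightarrow> real) \<Rightarrow> nat \<Rightarrow> 'a set \<Rightarrow> bool" where
  "is_top_set Ms m H \<longleftrightarrow> card H = m - 1 \<and> (\<forall>x\<in>H. \<forall>y. y \<notin> H \<longrightarrow> Ms y \<le> Ms x)"

definition resid :: "('a::finite \<Rightarrow> real) \<Rightarrow> 'a set \<Rightarrow> 'a \<Rightarrow> real" where
  "resid Ms H x = (if x \<in> H then 0 else Ms x / (\<Sum>y\<in>UNIV - H. Ms y))"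

definition pos_part :: "real \<Rightarrow> real" where
  "pos_part x = max x 0"

definition univer_Z :: "real \<Rightarrow> ('a::finite \<Rightarrow> real) \<Rightarrow> ('a \<Rightarrow> real) \<Rightarrow> 'a set \<Rightarrow> real" where
  "univer_Z pt Mb Ms H = 1 - pt + (\<Sum>x\<in>UNIV. pos_part (pt * Mb x - resid Ms H x))"

text \<open>UniVer allocation: univer_alloc pt Mb Ms H s t = p_v(t) when the sampled child u_m = s.\<close>
definition univer_alloc :: "real \<Rightarrow> ('a::finite \<Rightarrow> real) \<Rightarrow> ('a \<Rightarrow> real) \<Rightarrow> 'a set \<Rightarrow> 'a \<Rightarrow> 'a \<Rightarrow> real" where
  "univer_alloc pt Mb Ms H s t =
     (let pm = min 1 (pt * Mb s / resid Ms H s) in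
      if t = s then pm
      else pos_part (pt * Mb t - resid Ms H t) * (1 - pm) / univer_Z pt Mb Ms H)"

text \<open>An allocation: q s t = q(t | s), nonnegative, with total mass at most 1 for each s.\<close>
definition is_allocation :: "('a::finite \<Rightarrow> 'a \<Rightarrow> real) \<Rightarrow> bool" where
  "is_allocation q \<longleftrightarrow> (\<forall>s t. 0 \<le> q s t) \<and> (\<forall>s. (\<Sum>t\<in>UNIV. q s t) \<le> 1)"

definition locally_lossless :: "real \<Rightarrow> ('a::finite \<Rightarrow> real) \<Rightarrow> ('a \<Rightarrow> real) \<Rightarrow> 'a set \<Rightarrow> ('a \<Rightarrow> 'a \<Rightarrow> real) \<Rightarrow> bool" where
  "locally_lossless pt Mb Ms H q \<longleftrightarrow> (\<forall>t. (\<Sum>s\<in>UNIV. resid Ms H s * q s t) = pt * Mb t)"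

text \<open>Conditional acceptance rate: E_{u_m ~ Ms^neg}[ sum_{u in H} q(u|u_m) + q(u_m|u_m) ].\<close>
definition acc_rate :: "('a::finite \<Rightarrow> real) \<Rightarrow> 'a set \<Rightarrow> ('a \<Rightarrow> 'a \<Rightarrow> real) \<Rightarrow> real" where
  "acc_rate Ms H q = (\<Sum>s\<in>UNIV. resid Ms H s * ((\<Sum>u\<in>H. q s u) + q s s))"

definition alpha_star :: "real \<Rightarrow> ('a::finite \<Rightarrow> real) \<Rightarrow> ('a \<Rightarrow> real) \<Rightarrow> 'a set \<Rightarrow> real" where
  "alpha_star pt Mb Ms H = (\<Sum>u\<in>H. pt * Mb u) + (\<Sum>u\<in>UNIV. min (pt * Mb u) (resid Ms H u))"

end

theory Submission
  imports Defs
begin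

text \<open>Write \<open>r\<close> for the residual distribution. Local losslessness fixes the total weight
  \<open>\<Sum>s. r s * q s u = pt * Mb u\<close> received by every token \<open>u\<close>, so the greedy children in
  \<open>H\<close> contribute \<open>\<Sum>u\<in>H. pt * Mb u\<close> to the acceptance rate of every lossless allocation.
  Only the sampled child remains, contributing \<open>\<Sum>s. r s * q s s\<close>, and each term is at most
  \<open>r s\<close> (rows have mass at most 1) and at most \<open>pt * Mb s\<close> (losslessness at \<open>s\<close>).
  UniVer attains this bound: it accepts the sampled token with probability
  \<open>min 1 (pt * Mb s / r s)\<close>, and spreads the leftover mass proportionally to the excess
  \<open>[pt * Mb - r]\<^sub>+\<close>; its normaliser \<open>Z\<close> is exactly the expected leftover mass, which makes
  the allocation lossless.\<close>

lemma mult_min_one_divide: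
  fixes a r :: real
  assumes "0 \<le> a" and "0 \<le> r"
  shows "r * min 1 (a / r) = min a r"
proof (cases "r = 0")
  case False
  with assms show ?thesis by (auto simp: min_def field_simps)
qed (use assms in simp)

lemma diagonal_le_min:
  fixes q :: "'a::finite \<Rightarrow> 'a \<Rightarrow> real" and r b :: "'a \<Rightarrow> real"
  assumes "is_allocation q" and r_nonneg: "\<And>s. 0 \<le> r s"
    and marginal: "\<And>t. (\<Sum>s\<in>UNIV. r s * q s t) = b t"
  shows "r s * q s s \<le> min (b s) (r s)"
proof -
  have q_nonneg: "\<And>s t. 0 \<le> q s t" and row_le_1: "(\<Sum>t\<in>UNIV. q s t) \<le> 1"
    using assms(1) by (auto simp: is_allocation_def)
  have "q s s \<le> (\<Sum>t\<in>UNIV. q s t)"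
    by (rule member_le_sum) (use q_nonneg in auto)
  with row_le_1 have "r s * q s s \<le> r s"
    using r_nonneg[of s] by (simp add: mult_left_le)
  moreover have "r s * q s s \<le> (\<Sum>s'\<in>UNIV. r s' * q s' s)"
    by (rule member_le_sum) (use q_nonneg r_nonneg in auto)
  ultimately show ?thesis using marginal[of s] by simp
qed

lemma resid_nonneg: "(\<And>x. 0 \<le> Ms x) \<Longrightarrow> 0 \<le> resid Ms H x"
  by (simp add: resid_def sum_nonneg)

lemma acc_rate_locally_lossless:
  assumes "locally_lossless pt Mb Ms H q"
  shows "acc_rate Ms H q = (\<Sum>u\<in>H. pt * Mb u) + (\<Sum>s\<in>UNIV. resid Ms H s * q s s)"
proof -
  have "(\<Sum>s\<in>UNIV. resid Ms H s * (\<Sum>u\<in>H. q s u)) = (\<Sum>u\<in>H. \<Sum>s\<in>UNIV. resid Ms H s * q s u)"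
    by (simp add: sum_distrib_left sum.swap[of _ UNIV H])
  also have "\<dots> = (\<Sum>u\<in>H. pt * Mb u)"
    using assms by (simp add: locally_lossless_def)
  finally show ?thesis
    by (simp add: acc_rate_def distrib_left sum.distrib)
qed

lemma acc_rate_le_alpha_star:
  assumes "is_allocation q" and "locally_lossless pt Mb Ms H q" and "\<And>x. 0 \<le> Ms x"
  shows "acc_rate Ms H q \<le> alpha_star pt Mb Ms H"
proof -
  have "resid Ms H s * q s s \<le> min (pt * Mb s) (resid Ms H s)" for s
    using assms by (intro diagonal_le_min) (auto simp: resid_nonneg locally_lossless_def)
  then have "(\<Sum>s\<in>UNIV. resid Ms H s * q s s) \<le> (\<Sum>s\<in>UNIV. min (pt * Mb s) (resid Ms H s))"
    by (rule sum_mono)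
  then show ?thesis
    using acc_rate_locally_lossless[OF assms(2)] by (simp add: alpha_star_def)
qed

locale univer_setting =
  fixes pt :: real and Mb Ms :: "'a::finite \<Rightarrow> real" and H :: "'a set"
  assumes Mb_dist: "is_dist Mb"
    and Ms_nonneg: "\<And>x. 0 \<le> Ms x"
    and residual_mass_pos: "(\<Sum>y\<in>UNIV - H. Ms y) > 0"
    and pt_nonneg: "0 \<le> pt" and pt_le_1: "pt \<le> 1"
begin

abbreviation residual :: "'a \<Rightarrow> real" where
  "residual \<equiv> resid Ms H"

definition accept :: "'a \<Rightarrow> real" where
  "accept s = min 1 (pt * Mb s / residual s)"

definition excess :: "'a \<Rightarrow> real" where
  "excess t = pos_part (pt * Mb t - residual t)"

abbreviation Z :: real where
  "Z \<equiv> univer_Z pt Mb Ms H"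

lemma univer_alloc_eq:
  "univer_alloc pt Mb Ms H s t = (if t = s then accept s else excess t * (1 - accept s) / Z)"
  by (simp add: univer_alloc_def accept_def excess_def Let_def)

lemma Mb_nonneg: "0 \<le> Mb x"
  using Mb_dist by (simp add: is_dist_def)

lemma residual_nonneg: "0 \<le> residual x"
  using Ms_nonneg by (rule resid_nonneg)

lemma sum_residual: "(\<Sum>x\<in>UNIV. residual x) = 1"
proof -
  have "(\<Sum>x\<in>UNIV. residual x) = (\<Sum>x\<in>UNIV - H. residual x)"
    by (rule sum.mono_neutral_right) (auto simp: resid_def)
  also have "\<dots> = (\<Sum>x\<in>UNIV - H. Ms x) / (\<Sum>y\<in>UNIV - H. Ms y)"
    by (simp add: resid_def flip: sum_divide_distrib)
  finally show ?thesis
    using residual_mass_pos by simp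
qed

lemma accept_nonneg: "0 \<le> accept s"
  using pt_nonneg Mb_nonneg residual_nonneg by (simp add: accept_def)

lemma accept_le_1: "accept s \<le> 1"
  by (simp add: accept_def)

lemma residual_mult_accept: "residual s * accept s = min (pt * Mb s) (residual s)"
  unfolding accept_def
  using pt_nonneg Mb_nonneg residual_nonneg by (simp add: mult_min_one_divide)

lemma excess_nonneg: "0 \<le> excess t"
  by (simp add: excess_def pos_part_def)

lemma excess_add_min: "excess t + min (pt * Mb t) (residual t) = pt * Mb t"
  by (simp add: excess_def pos_part_def)

lemma Z_eq: "Z = 1 - pt + (\<Sum>t\<in>UNIV. excess t)"
  by (simp add: univer_Z_def excess_def)

lemma sum_excess_le_Z: "(\<Sum>t\<in>UNIV. excess t) \<le> Z"
  using pt_le_1 by (simp add: Z_eq)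

lemma sum_residual_reject: "(\<Sum>s\<in>UNIV. residual s * (1 - accept s)) = Z"
proof -
  have "(\<Sum>t\<in>UNIV. excess t + min (pt * Mb t) (residual t)) = pt"
    using Mb_dist by (simp add: excess_add_min is_dist_def flip: sum_distrib_left)
  then have "(\<Sum>s\<in>UNIV. min (pt * Mb s) (residual s)) = pt - (\<Sum>t\<in>UNIV. excess t)"
    by (simp add: sum.distrib)
  then show ?thesis
    by (simp add: right_diff_distrib sum_subtractf sum_residual residual_mult_accept Z_eq)
qed

lemma residual_reject_eq_0:
  assumes "excess t > 0"
  shows "residual t * (1 - accept t) = 0"
proof -
  from assms have "residual t < pt * Mb t"
    by (simp add: excess_def pos_part_def)
  then show ?thesis
    using residual_mult_accept[of t] by (simp add: right_diff_distrib)
qed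

lemma univer_is_allocation: "is_allocation (univer_alloc pt Mb Ms H)"
  unfolding is_allocation_def
proof (intro conjI allI)
  have Z_nonneg: "0 \<le> Z"
    using sum_excess_le_Z excess_nonneg order_trans sum_nonneg by metis
  fix s
  show "0 \<le> univer_alloc pt Mb Ms H s t" for t
    using accept_nonneg accept_le_1 excess_nonneg Z_nonneg by (simp add: univer_alloc_eq)
  have "(\<Sum>t\<in>UNIV - {s}. excess t * (1 - accept s) / Z) \<le> (\<Sum>t\<in>UNIV. excess t * (1 - accept s) / Z)"
    by (rule sum_mono2) (use excess_nonneg accept_le_1 Z_nonneg in auto)
  also have "\<dots> = (1 - accept s) * ((\<Sum>t\<in>UNIV. excess t) / Z)"
    by (simp add: sum_divide_distrib[symmetric] sum_distrib_right[symmetric] mult.commute)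
  also have "\<dots> \<le> 1 - accept s"
    using accept_le_1 sum_excess_le_Z Z_nonneg
    by (intro mult_left_le) (auto simp: divide_le_eq_1 sum_nonneg excess_nonneg)
  finally show "(\<Sum>t\<in>UNIV. univer_alloc pt Mb Ms H s t) \<le> 1"
    by (simp add: sum.remove[of UNIV s] univer_alloc_eq)
qed

lemma univer_locally_lossless: "locally_lossless pt Mb Ms H (univer_alloc pt Mb Ms H)"
  unfolding locally_lossless_def
proof
  fix t
  have spread: "(\<Sum>s\<in>UNIV - {t}. residual s * (excess t * (1 - accept s) / Z)) = excess t"
  proof (cases "excess t > 0")
    case True
    have "excess t \<le> (\<Sum>t\<in>UNIV. excess t)"
      by (rule member_le_sum) (use excess_nonneg in auto)
    with True sum_excess_le_Z have "Z \<noteq> 0" by linarith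
    have "(\<Sum>s\<in>UNIV - {t}. residual s * (excess t * (1 - accept s) / Z))
        = (\<Sum>s\<in>UNIV. residual s * (excess t * (1 - accept s) / Z))"
      by (rule sum.mono_neutral_left) (use residual_reject_eq_0[OF True] in auto)
    also have "\<dots> = (\<Sum>s\<in>UNIV. residual s * (1 - accept s)) * (excess t / Z)"
      unfolding sum_distrib_right by (rule sum.cong) (simp_all add: mult_ac)
    also have "\<dots> = excess t"
      using \<open>Z \<noteq> 0\<close> by (simp add: sum_residual_reject)
    finally show ?thesis .
  qed (use excess_nonneg[of t] in simp)
  show "(\<Sum>s\<in>UNIV. residual s * univer_alloc pt Mb Ms H s t) = pt * Mb t"
    using spread residual_mult_accept[of t] excess_add_min[of t]
    by (simp add: sum.remove[of UNIV t] univer_alloc_eq)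
qed

lemma univer_acc_rate: "acc_rate Ms H (univer_alloc pt Mb Ms H) = alpha_star pt Mb Ms H"
  by (simp add: acc_rate_locally_lossless[OF univer_locally_lossless] univer_alloc_eq
      residual_mult_accept alpha_star_def)

end

theorem theorem5:
  fixes Mb Ms :: "'a::finite \<Rightarrow> real" and H :: "'a set" and m :: nat and pt :: real
  assumes "is_dist Mb" and "is_dist Ms"
    and "m \<ge> 1"
    and "is_top_set Ms m H"
    and "(\<Sum>y\<in>UNIV - H. Ms y) > 0"
    and "0 \<le> pt" and "pt \<le> 1"
  shows "is_allocation (univer_alloc pt Mb Ms H)
     \<and> locally_lossless pt Mb Ms H (univer_alloc pt Mb Ms H)
     \<and> acc_rate Ms H (univer_alloc pt Mb Ms H) = alpha_star pt Mb Ms H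
     \<and> (\<forall>q. is_allocation q \<and> locally_lossless pt Mb Ms H q
            \<longrightarrow> acc_rate Ms H q \<le> alpha_star pt Mb Ms H)"
proof -
  have Ms_nonneg: "\<And>x. 0 \<le> Ms x"
    using \<open>is_dist Ms\<close> by (simp add: is_dist_def)
  interpret univer_setting pt Mb Ms H
    using assms Ms_nonneg by unfold_locales auto
  show ?thesis
    using univer_is_allocation univer_locally_lossless univer_acc_rate
      acc_rate_le_alpha_star Ms_nonneg by blast
qed

end
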